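(* Let a thermodynamic Stephani universe be given and consider any thermodynamic scheme with specific entropy $s=s(w)$ ($s'\neq0$), matter density $n=(1+bw)^3/(R^3N(w))$ ($N>0$) and temperature $$\Theta=\frac{(\rho+p)R^3[N'(w)(1+bw)-3N(w)b]}{s'(w)(1+bw)^4}.$$ If the fluid acceleration $\mathbf a$ satisfies $\mathbf a=-\perp d\ln\Theta$ (equivalently $\partial_w(\alpha\Theta)=0$), then $b$ is constant, i.e. the metric is a FLRW universe. Hence a thermodynamic Stephani universe can describe a fluid with non-vanishing thermal conductivity coefficient only in the FLRW case.
   Context: Thermodynamic Stephani universe: $ds^2=-\alpha^2dt^2+\Omega^2(dx^2+dy^2+dz^2)$ with $L=R(t)/(1+b(t)w)$, $\Omega=\frac{w}{2z}L$, $\alpha=R\,\partial_R\ln L=\frac{1+(b-Rb')w}{1+bw}$, $w=2z/(1+\frac\varepsilon4 r^2)$, $r^2=x^2+y^2+z^2$, $\varepsilon\in\{0,\pm1\}$; functions of $t$ are regarded as functions of $R$ (prime $=d/dR$). Fluid velocity $u=\alpha^{-1}\partial_t$, $\rho=\frac{3}{R^2}(\dot R^2+\varepsilon-4b^2)$, $p=-\rho-\frac R3\frac{\rho'(R)}{\alpha}$. $\mathbf a=\nabla_uu$ is the acceleration, $\perp$ is the orthogonal projection onto the space orthogonal to $u$. *)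

theory Defs
  imports "HOL-Analysis.Analysis"
begin

text \<open>All functions of time are regarded as
functions of the scale factor R; the prime is d/dR (for b, rho) and d/dw
(for N, s).  The function V gives (dR/dt)^2 regarded as a function of R.\<close>

definition st_w :: "real \<Rightarrow> real \<Rightarrow> real \<Rightarrow> real \<Rightarrow> real" where
  "st_w eps x y z = 2 * z / (1 + eps / 4 * (x^2 + y^2 + z^2))"

definition st_alpha :: "(real \<Rightarrow> real) \<Rightarrow> real \<Rightarrow> real \<Rightarrow> real" where
  "st_alpha b R w = (1 + (b R - R * deriv b R) * w) / (1 + b R * w)"

definition st_rho :: "real \<Rightarrow> (real \<Rightarrow> real) \<Rightarrow> (real \<Rightarrow> real) \<Rightarrow> real \<Rightarrow> real" where
  "st_rho eps V b R = 3 / R^2 * (V R + eps - 4 * (b R)^2)"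

definition st_p :: "real \<Rightarrow> (real \<Rightarrow> real) \<Rightarrow> (real \<Rightarrow> real) \<Rightarrow> real \<Rightarrow> real \<Rightarrow> real" where
  "st_p eps V b R w =
     - st_rho eps V b R - R / 3 * deriv (st_rho eps V b) R / st_alpha b R w"

definition st_n :: "(real \<Rightarrow> real) \<Rightarrow> (real \<Rightarrow> real) \<Rightarrow> real \<Rightarrow> real \<Rightarrow> real" where
  "st_n b N R w = (1 + b R * w)^3 / (R^3 * N w)"

definition st_Theta :: "real \<Rightarrow> (real \<Rightarrow> real) \<Rightarrow> (real \<Rightarrow> real) \<Rightarrow> (real \<Rightarrow> real)
    \<Rightarrow> (real \<Rightarrow> real) \<Rightarrow> real \<Rightarrow> real \<Rightarrow> real" where
  "st_Theta eps V b N s R w =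
     (st_rho eps V b R + st_p eps V b R w) * R^3
       * (deriv N w * (1 + b R * w) - 3 * N w * b R)
     / (deriv s w * (1 + b R * w)^4)"

end

theory Submission
  imports Defs "HOL-Computational_Algebra.Polynomial"
begin

text \<open>Since \<open>\<alpha> (\<rho> + p) = - R \<rho>'/3\<close>, the product \<open>\<alpha> \<Theta>\<close> is a factor depending on \<open>R\<close> alone,
nonzero because \<open>\<Theta> > 0\<close>, times \<open>F(b, w) / (s'(w) (1 + b w)\<^sup>4)\<close> with
\<open>F(\<beta>, w) = N'(w) (1 + \<beta> w) - 3 N(w) \<beta>\<close>. If this is independent of \<open>w\<close>, comparing two points
\<open>w\<^sub>1 \<noteq> w\<^sub>2\<close> of \<open>W\<close> with \<open>w\<^sub>1 \<noteq> 0\<close> shows that every value \<open>b(R)\<close> is a root of one fixed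
polynomial in \<open>\<beta>\<close>, which is nonzero since its value at \<open>\<beta> = -1/w\<^sub>1\<close> is not.
So the continuous function \<open>b\<close> takes only finitely many values on the interval \<open>J\<close>,
hence it is constant.\<close>

definition temperature_factor :: "(real \<Rightarrow> real) \<Rightarrow> real \<Rightarrow> real \<Rightarrow> real" where
  "temperature_factor N \<beta> w = deriv N w * (1 + \<beta> * w) - 3 * N w * \<beta>"

text \<open>A junk-value case: \<open>x / 0 = 0\<close> in \<open>st_p\<close> makes \<open>\<rho> + p\<close> vanish when \<open>\<alpha> = 0\<close>.\<close>

lemma st_alpha_eq_0_imp_Theta_eq_0:
  "st_alpha b R w = 0 \<Longrightarrow> st_Theta eps V b N s R w = 0"
  by (simp add: st_Theta_def st_p_def)

lemma st_alpha_rho_plus_p: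
  assumes "st_alpha b R w \<noteq> 0"
  shows "st_alpha b R w * (st_rho eps V b R + st_p eps V b R w) = - R / 3 * deriv (st_rho eps V b) R"
  using assms by (simp add: st_p_def)

lemma st_Theta_nonzero_imp_deriv_rho_nonzero:
  assumes "st_Theta eps V b N s R w \<noteq> 0"
  shows "deriv (st_rho eps V b) R \<noteq> 0"
  using assms by (auto simp: st_Theta_def st_p_def)

lemma st_alpha_Theta_eq:
  assumes "st_Theta eps V b N s R w \<noteq> 0"
  shows "st_alpha b R w * st_Theta eps V b N s R w =
    - (R^4 / 3) * deriv (st_rho eps V b) R
      * (temperature_factor N (b R) w / (deriv s w * (1 + b R * w)^4))"
proof -
  have "st_alpha b R w \<noteq> 0"
    using assms st_alpha_eq_0_imp_Theta_eq_0 by blast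
  have "st_alpha b R w * st_Theta eps V b N s R w =
      - R / 3 * deriv (st_rho eps V b) R * R^3
        * temperature_factor N (b R) w / (deriv s w * (1 + b R * w)^4)"
    unfolding st_Theta_def temperature_factor_def
    by (simp only: times_divide_eq_right mult.assoc [symmetric]
        st_alpha_rho_plus_p [OF \<open>st_alpha b R w \<noteq> 0\<close>])
  then show ?thesis
    by (simp add: power_numeral_reduce)
qed

lemma finite_temperature_factor_cross_roots:
  fixes a1 a2 c1 c2 k1 k2 w1 w2 :: real
  assumes "w1 \<noteq> 0" "w1 \<noteq> w2" "c1 \<noteq> 0" "k2 \<noteq> 0"
  shows "finite {\<beta>. (a1 * (1 + \<beta> * w1) - 3 * c1 * \<beta>) * (k2 * (1 + \<beta> * w2)^4)
                  = (a2 * (1 + \<beta> * w2) - 3 * c2 * \<beta>) * (k1 * (1 + \<beta> * w1)^4)}"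
proof -
  define P where "P = smult k2 ([:a1, a1 * w1 - 3 * c1:] * [:1, w2:]^4)
                    - smult k1 ([:a2, a2 * w2 - 3 * c2:] * [:1, w1:]^4)"
  have poly_P: "poly P \<beta> = (a1 * (1 + \<beta> * w1) - 3 * c1 * \<beta>) * (k2 * (1 + \<beta> * w2)^4)
                         - (a2 * (1 + \<beta> * w2) - 3 * c2 * \<beta>) * (k1 * (1 + \<beta> * w1)^4)" for \<beta>
    by (simp add: P_def algebra_simps)
  \<comment> \<open>at \<open>\<beta> = -1/w\<^sub>1\<close> the second term vanishes and the first does not\<close>
  have "poly P (-1/w1) = 3 * c1 / w1 * k2 * (1 - w2/w1)^4"
    using assms by (simp add: poly_P field_simps)
  also have "\<dots> \<noteq> 0"
    using assms by (simp add: field_simps)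
  finally have "P \<noteq> 0" by auto
  then show ?thesis
    using poly_roots_finite[of P] by (simp add: poly_P)
qed

lemma open_obtain_two_points:
  fixes W :: "real set"
  assumes "open W" "W \<noteq> {}"
  obtains w1 w2 where "w1 \<in> W" "w2 \<in> W" "w1 \<noteq> 0" "w1 \<noteq> w2"
proof -
  have "infinite W"
    using assms finite_imp_not_open [of W] by auto
  obtain w1 where "w1 \<in> W - {0}"
    using infinite_imp_nonempty [OF infinite_remove [OF \<open>infinite W\<close>]] by blast
  moreover obtain w2 where "w2 \<in> W - {w1}"
    using infinite_imp_nonempty [OF infinite_remove [OF \<open>infinite W\<close>]] by blast
  ultimately show ?thesis
    using that by blast
qed

lemma st_b_cross_relation:
  assumes W: "is_interval W" "w1 \<in> W" "w2 \<in> W"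
    and "R \<noteq> 0"
    and Theta_nz: "st_Theta eps V b N s R w1 \<noteq> 0" "st_Theta eps V b N s R w2 \<noteq> 0"
    and denom_nz: "deriv s w1 * (1 + b R * w1)^4 \<noteq> 0" "deriv s w2 * (1 + b R * w2)^4 \<noteq> 0"
    and accel: "\<And>w. w \<in> W \<Longrightarrow>
       ((\<lambda>w'. st_alpha b R w' * st_Theta eps V b N s R w') has_real_derivative 0) (at w)"
  shows "temperature_factor N (b R) w1 * (deriv s w2 * (1 + b R * w2)^4)
       = temperature_factor N (b R) w2 * (deriv s w1 * (1 + b R * w1)^4)"
proof -
  let ?k = "- (R^4 / 3) * deriv (st_rho eps V b) R"
  have "\<exists>c. \<forall>w\<in>W. st_alpha b R w * st_Theta eps V b N s R w = c"
    using is_interval_convex[OF W(1)] accel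
    by (intro has_field_derivative_zero_constant) (auto intro: has_field_derivative_at_within)
  then have "st_alpha b R w1 * st_Theta eps V b N s R w1 = st_alpha b R w2 * st_Theta eps V b N s R w2"
    using W(2,3) by auto
  then have "?k * (temperature_factor N (b R) w1 / (deriv s w1 * (1 + b R * w1)^4))
           = ?k * (temperature_factor N (b R) w2 / (deriv s w2 * (1 + b R * w2)^4))"
    unfolding st_alpha_Theta_eq[OF Theta_nz(1)] st_alpha_Theta_eq[OF Theta_nz(2)] .
  moreover have "?k \<noteq> 0"
    using \<open>R \<noteq> 0\<close> st_Theta_nonzero_imp_deriv_rho_nonzero[OF Theta_nz(1)] by simp
  ultimately show ?thesis
    using denom_nz by (simp add: frac_eq_eq)
qed

theorem mainTheorem11:
  fixes eps :: real and b V N s :: "real \<Rightarrow> real" and J W :: "real set"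
  assumes eps: "eps \<in> {-1, 0, 1}"
    and J: "open J" "is_interval J" "J \<noteq> {}" "J \<subseteq> {0<..}"
    and W: "open W" "is_interval W" "W \<noteq> {}"
    and W_range: "W \<subseteq> {st_w eps x y z | x y z. 1 + eps / 4 * (x^2 + y^2 + z^2) > 0}"
    and b_diff: "\<And>R. R \<in> J \<Longrightarrow> b differentiable (at R)"
    and V_diff: "\<And>R. R \<in> J \<Longrightarrow> V differentiable (at R)"
    and N_diff: "\<And>w. w \<in> W \<Longrightarrow> N differentiable (at w)"
    and s_diff: "\<And>w. w \<in> W \<Longrightarrow> s differentiable (at w)"
    and N_pos: "\<And>w. w \<in> W \<Longrightarrow> N w > 0"
    and s'_nz: "\<And>w. w \<in> W \<Longrightarrow> deriv s w \<noteq> 0"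
    and nondeg: "\<And>R w. R \<in> J \<Longrightarrow> w \<in> W \<Longrightarrow> 1 + b R * w \<noteq> 0"
    and Theta_pos: "\<And>R w. R \<in> J \<Longrightarrow> w \<in> W \<Longrightarrow> st_Theta eps V b N s R w > 0"
    and accel: "\<And>R w. R \<in> J \<Longrightarrow> w \<in> W \<Longrightarrow>
       ((\<lambda>w'. st_alpha b R w' * st_Theta eps V b N s R w') has_real_derivative 0) (at w)"
  shows "\<exists>c. \<forall>R\<in>J. b R = c"
proof -
  obtain w1 w2 where w12: "w1 \<in> W" "w2 \<in> W" "w1 \<noteq> 0" "w1 \<noteq> w2"
    using open_obtain_two_points W(1,3) by blast
  have "b ` J \<subseteq> {\<beta>. temperature_factor N \<beta> w1 * (deriv s w2 * (1 + \<beta> * w2)^4)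
                        = temperature_factor N \<beta> w2 * (deriv s w1 * (1 + \<beta> * w1)^4)}"
  proof clarsimp
    fix R assume R: "R \<in> J"
    then have "R \<noteq> 0"
      using J(4) by auto
    then show "temperature_factor N (b R) w1 * (deriv s w2 * (1 + b R * w2)^4)
             = temperature_factor N (b R) w2 * (deriv s w1 * (1 + b R * w1)^4)"
      using W(2) w12 Theta_pos[OF R] s'_nz nondeg[OF R] accel[OF R]
      by (intro st_b_cross_relation [where b = b and eps = eps and V = V]) force+
  qed
  moreover have "finite \<dots>"
    unfolding temperature_factor_def
    using w12 N_pos[OF w12(1)] s'_nz[OF w12(2)] by (intro finite_temperature_factor_cross_roots) auto
  ultimately have "finite (b ` J)"
    by (rule finite_subset)
  moreover have "continuous_on J b"
    using b_diff by (meson continuous_at_imp_continuous_on differentiable_imp_continuous_within)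
  ultimately show ?thesis
    using continuous_finite_range_constant is_interval_connected[OF J(2)]
    unfolding constant_on_def by blast
qed

end
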